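(* Under the hypotheses of the preceding lemma (Assumption B, $V_0\in W^{1,\infty}(\Omega)$, $V_0\ge0$, free-energy-setting confining potentials $V_k$, $u_k$ a free energy solution of $(\mathrm{E}_{V_k})$), there is a constant $C$ independent of $k$ such that for all $T'\in[0,T]$ $$\int_{\mathbb R^d}\big[u_k|\log u_k|+\Xi(u_k)+u_kV_k+u_k(W*u_k)\big](T')\,dx+\int_0^{T'}\!\!\int_{\mathbb R^d}u_k\big|\nabla\big(\log u_k+\xi(u_k)+V_k+W*u_k\big)\big|^2dx\,dt\le C.$$
   Context: $\Omega\subset\mathbb R^d$ bounded connected $C^2$ domain, $T>0$. Assumption B (free energy setting): (i) $u_0\ge0$, $\int u_0=1$, $\mathrm{supp}\,u_0\subseteq\Omega$, and $E_{V_1}[u_0]<\infty$; (ii) $W\in W^{1,\infty}_{loc}(\mathbb R^d)$, symmetric, $W\ge0$; (iii) potentials $V\in W^{1,\infty}_{loc}$, $V\ge0$, $V(x)\ge c|x|^2$ for large $|x|$; (iv) $\phi\in C^1([0,\infty))$ increasing, $\phi(s)=s+\sigma(s)$, $\phi(0)=0$, $\mu s^a\le\sigma'(s)\le\mu^{-1}s^b$ for $s\ge0$, $\mu>0$, $b\ge a>0$. $\xi(s)=\int_1^s\sigma'(r)/r\,dr$, $\Xi(u)=\int_0^u\xi$, $E_V[u]=\int[u\log u+\Xi(u)+uV+\frac12u(W*u)]dx$. A free energy solution of $(\mathrm{E}_V)$ ($\partial_tu=\mathrm{div}[\nabla\phi(u)+u\nabla V+u\nabla(W*u)]$, $u(0)=u_0$)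 is $u\in C([0,T];\mathcal P_2(\mathbb R^d))\cap L^\infty(0,T;L^1)$, $u\ge0$, distributional solution, $u(t)\to u_0$ in $\mathcal P_2$, satisfying $E_V[u(t)]+\int_0^t\int u|\nabla(\log u+\xi(u)+V+W*u)|^2dxd\tau=E_V[u_0]$. $\Omega_k=\{x:\mathrm{dist}(x,\Omega)\le1/k\}$; $V_k=V_0$ on $\Omega$, $V_k=\zeta_k\ge k$ on $\mathbb R^d\setminus\Omega_k$, $V_k=\psi_k\ge0$ on $\Omega_k\setminus\Omega$, $V_k\in W^{1,\infty}_{loc}$, and $V_k(x)\ge c|x|^2$ for $|x|\ge R$ with $c,R$ independent of $k$. *)

theory Defs
  imports "HOL-Analysis.Analysis"
begin

fun Ck :: "nat \<Rightarrow> ('a::euclidean_space \<Rightarrow> real) \<Rightarrow> bool" where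
  "Ck 0 f = continuous_on UNIV f"
| "Ck (Suc n) f = (continuous_on UNIV f \<and> (\<forall>x. f differentiable (at x)) \<and>
       (\<forall>v. Ck n (\<lambda>x. frechet_derivative f (at x) v)))"

definition smooth_fun :: "('a::euclidean_space \<Rightarrow> real) \<Rightarrow> bool" where
  "smooth_fun f \<longleftrightarrow> (\<forall>n. Ck n f)"

definition tsupport :: "('a::euclidean_space \<Rightarrow> real) \<Rightarrow> 'a set" where
  "tsupport f = closure {x. f x \<noteq> 0}"

definition test_fun :: "('a::euclidean_space \<Rightarrow> real) \<Rightarrow> bool" where
  "test_fun f \<longleftrightarrow> smooth_fun f \<and> compact (tsupport f)"

definition grad :: "('a::euclidean_space \<Rightarrow> real) \<Rightarrow> 'a \<Rightarrow> 'a" where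
  "grad f x = (\<Sum>b\<in>Basis. frechet_derivative f (at x) b *\<^sub>R b)"

definition dtime :: "(real \<times> 'a::euclidean_space \<Rightarrow> real) \<Rightarrow> real \<times> 'a \<Rightarrow> real" where
  "dtime f z = frechet_derivative f (at z) (1, 0)"

definition gradx :: "(real \<times> 'a::euclidean_space \<Rightarrow> real) \<Rightarrow> real \<times> 'a \<Rightarrow> 'a" where
  "gradx f z = (\<Sum>b\<in>Basis. frechet_derivative f (at z) (0, b) *\<^sub>R b)"

definition weak_grad_on :: "'a::euclidean_space set \<Rightarrow> ('a \<Rightarrow> real) \<Rightarrow> ('a \<Rightarrow> 'a) \<Rightarrow> bool" where
  "weak_grad_on U f g \<longleftrightarrow>
     (\<forall>K. compact K \<and> K \<subseteq> U \<longrightarrow> set_integrable lebesgue K f \<and> set_integrable lebesgue K g) \<and>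
     (\<forall>\<psi>. test_fun \<psi> \<and> tsupport \<psi> \<subseteq> U \<longrightarrow>
        (\<integral>x. f x *\<^sub>R grad \<psi> x \<partial>lebesgue) = - (\<integral>x. \<psi> x *\<^sub>R g x \<partial>lebesgue))"

definition Linf_loc :: "'a::euclidean_space set \<Rightarrow> ('a \<Rightarrow> 'b::real_normed_vector) \<Rightarrow> bool" where
  "Linf_loc U f \<longleftrightarrow> set_borel_measurable lebesgue U f \<and>
     (\<forall>K. compact K \<and> K \<subseteq> U \<longrightarrow> (\<exists>M. AE x in lebesgue. x \<in> K \<longrightarrow> norm (f x) \<le> M))"

definition Linf_on :: "'a::euclidean_space set \<Rightarrow> ('a \<Rightarrow> 'b::real_normed_vector) \<Rightarrow> bool" where
  "Linf_on U f \<longleftrightarrow> set_borel_measurable lebesgue U f \<and>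
     (\<exists>M. AE x in lebesgue. x \<in> U \<longrightarrow> norm (f x) \<le> M)"

definition W1inf_loc_with :: "('a::euclidean_space \<Rightarrow> real) \<Rightarrow> ('a \<Rightarrow> 'a) \<Rightarrow> bool" where
  "W1inf_loc_with f g \<longleftrightarrow> Linf_loc UNIV f \<and> weak_grad_on UNIV f g \<and> Linf_loc UNIV g"

definition W1inf_on :: "'a::euclidean_space set \<Rightarrow> ('a \<Rightarrow> real) \<Rightarrow> bool" where
  "W1inf_on U f \<longleftrightarrow> (\<exists>g. Linf_on U f \<and> weak_grad_on U f g \<and> Linf_on U g)"

definition C2_domain :: "'a::euclidean_space set \<Rightarrow> bool" where
  "C2_domain \<Omega> \<longleftrightarrow> open \<Omega> \<and> bounded \<Omega> \<and> connected \<Omega> \<and> \<Omega> \<noteq> {} \<and>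
     (\<forall>p\<in>frontier \<Omega>. \<exists>r>0. \<exists>\<rho>. Ck 2 \<rho> \<and> (\<forall>x\<in>ball p r. grad \<rho> x \<noteq> 0) \<and>
         \<Omega> \<inter> ball p r = {x\<in>ball p r. \<rho> x < 0})"

definition esupp :: "('a::euclidean_space \<Rightarrow> real) \<Rightarrow> 'a set" where
  "esupp f = - \<Union>{U. open U \<and> (AE x in lebesgue. x \<in> U \<longrightarrow> f x = 0)}"

text \<open>phi' is the derivative of phi, so sigma' = phi' - 1.\<close>
definition xi :: "(real \<Rightarrow> real) \<Rightarrow> real \<Rightarrow> real" where
  "xi \<phi>' s = interval_lebesgue_integral lborel (ereal 1) (ereal s) (\<lambda>r. (\<phi>' r - 1) / r)"

definition Xi :: "(real \<Rightarrow> real) \<Rightarrow> real \<Rightarrow> real" where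
  "Xi \<phi>' u = interval_lebesgue_integral lborel (ereal 0) (ereal u) (\<lambda>s. xi \<phi>' s)"

definition ent :: "real \<Rightarrow> real" where
  "ent s = (if s > 0 then s * ln s else 0)"

definition ent_abs :: "real \<Rightarrow> real" where
  "ent_abs s = (if s > 0 then s * \<bar>ln s\<bar> else 0)"

definition conv :: "('a::euclidean_space \<Rightarrow> real) \<Rightarrow> ('a \<Rightarrow> real) \<Rightarrow> 'a \<Rightarrow> real" where
  "conv W u x = (\<integral>y. W (x - y) * u y \<partial>lebesgue)"

definition conv_vec :: "('a::euclidean_space \<Rightarrow> 'a) \<Rightarrow> ('a \<Rightarrow> real) \<Rightarrow> 'a \<Rightarrow> 'a" where
  "conv_vec G u x = (\<integral>y. u y *\<^sub>R G (x - y) \<partial>lebesgue)"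

definition energy_density ::
  "(real \<Rightarrow> real) \<Rightarrow> ('a::euclidean_space \<Rightarrow> real) \<Rightarrow> ('a \<Rightarrow> real) \<Rightarrow> ('a \<Rightarrow> real) \<Rightarrow> 'a \<Rightarrow> real" where
  "energy_density \<phi>' V W u x = ent (u x) + Xi \<phi>' (u x) + u x * V x + 1/2 * u x * conv W u x"

text \<open>E_V[u] (finiteness is expressed separately by integrability of the density).\<close>
definition energy ::
  "(real \<Rightarrow> real) \<Rightarrow> ('a::euclidean_space \<Rightarrow> real) \<Rightarrow> ('a \<Rightarrow> real) \<Rightarrow> ('a \<Rightarrow> real) \<Rightarrow> real" where
  "energy \<phi>' V W u = (\<integral>x. energy_density \<phi>' V W u x \<partial>lebesgue)"

text \<open>Dissipation density u |\<nabla>(log u + xi(u) + V + W*u)|^2, written via the flux: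
  u \<nabla>(log u + xi(u) + V + W*u) = \<nabla>phi(u) + u \<nabla>V + u (\<nabla>W * u), where G is the weak
  gradient of phi(u(t)), gV of V and gW of W; convention 0 where u = 0.\<close>
definition dissip ::
  "(real \<Rightarrow> 'a::euclidean_space \<Rightarrow> real) \<Rightarrow> (real \<Rightarrow> 'a \<Rightarrow> 'a) \<Rightarrow> ('a \<Rightarrow> 'a) \<Rightarrow> ('a \<Rightarrow> 'a)
     \<Rightarrow> real \<times> 'a \<Rightarrow> real" where
  "dissip u G gV gW z = (let t = fst z; x = snd z in
     if u t x > 0 then (norm (G t x + u t x *\<^sub>R gV x + u t x *\<^sub>R conv_vec gW (u t) x))\<^sup>2 / u t x
     else 0)"

definition P2_dens :: "('a::euclidean_space \<Rightarrow> real) \<Rightarrow> bool" where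
  "P2_dens f \<longleftrightarrow> (\<forall>x. f x \<ge> 0) \<and> integrable lebesgue f \<and> (\<integral>x. f x \<partial>lebesgue) = 1 \<and>
     integrable lebesgue (\<lambda>x. (norm x)\<^sup>2 * f x)"

definition coupling :: "('a::euclidean_space \<Rightarrow> real) \<Rightarrow> ('a \<Rightarrow> real) \<Rightarrow> ('a \<times> 'a) measure \<Rightarrow> bool" where
  "coupling f g \<pi> \<longleftrightarrow> sets \<pi> = sets (borel :: ('a \<times> 'a) measure) \<and>
     (\<forall>A\<in>sets (borel :: 'a measure).
        emeasure \<pi> (A \<times> UNIV) = (\<integral>\<^sup>+x. indicator A x * ennreal (f x) \<partial>lebesgue)) \<and>
     (\<forall>B\<in>sets (borel :: 'a measure).
        emeasure \<pi> (UNIV \<times> B) = (\<integral>\<^sup>+x. indicator B x * ennreal (g x) \<partial>lebesgue))"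

definition W2sq :: "('a::euclidean_space \<Rightarrow> real) \<Rightarrow> ('a \<Rightarrow> real) \<Rightarrow> ennreal" where
  "W2sq f g = (INF \<pi>\<in>{\<pi>. coupling f g \<pi>}. \<integral>\<^sup>+z. ennreal ((dist (fst z) (snd z))\<^sup>2) \<partial>\<pi>)"

text \<open>u is a free energy solution of
  \<partial>_t u = div[\<nabla>phi(u) + u \<nabla>V + u \<nabla>(W*u)], u(0) = u0 on [0,T];
  G t is the weak gradient of phi(u(t)), gV of V, gW of W.\<close>
definition free_energy_solution ::
  "(real \<Rightarrow> real) \<Rightarrow> (real \<Rightarrow> real) \<Rightarrow> ('a::euclidean_space \<Rightarrow> real) \<Rightarrow> ('a \<Rightarrow> 'a)
   \<Rightarrow> ('a \<Rightarrow> real) \<Rightarrow> ('a \<Rightarrow> 'a) \<Rightarrow> ('a \<Rightarrow> real) \<Rightarrow> real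
   \<Rightarrow> (real \<Rightarrow> 'a \<Rightarrow> real) \<Rightarrow> (real \<Rightarrow> 'a \<Rightarrow> 'a) \<Rightarrow> bool" where
  "free_energy_solution \<phi> \<phi>' W gW V gV u0 T u G \<longleftrightarrow>
     \<comment> \<open>u \<in> C([0,T]; P_2) \<inter> L^\<infinity>(0,T; L^1), u \<ge> 0\<close>
     (\<forall>t\<in>{0..T}. P2_dens (u t)) \<and>
     (\<forall>t\<in>{0..T}. ((\<lambda>s. W2sq (u s) (u t)) \<longlongrightarrow> 0) (at t within {0..T})) \<and>
     set_borel_measurable lebesgue ({0..T} \<times> UNIV) (\<lambda>z. u (fst z) (snd z)) \<and>
     (\<forall>t x. u t x \<ge> 0) \<and>
     \<comment> \<open>u(t) \<rightarrow> u0 in P_2\<close>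
     ((\<lambda>t. W2sq (u t) u0) \<longlongrightarrow> 0) (at_right 0) \<and>
     \<comment> \<open>G(t) = \<nabla>phi(u(t)) for a.e. t\<close>
     set_borel_measurable lebesgue ({0..T} \<times> UNIV) (\<lambda>z. G (fst z) (snd z)) \<and>
     (AE t in lebesgue. t \<in> {0<..<T} \<longrightarrow> weak_grad_on UNIV (\<lambda>x. \<phi> (u t x)) (G t)) \<and>
     \<comment> \<open>distributional solution\<close>
     (\<forall>\<psi>. test_fun \<psi> \<and> tsupport \<psi> \<subseteq> {0<..<T} \<times> UNIV \<longrightarrow>
        (let F = (\<lambda>z. u (fst z) (snd z) * dtime \<psi> z
              - (G (fst z) (snd z) + u (fst z) (snd z) *\<^sub>R gV (snd z)
                 + u (fst z) (snd z) *\<^sub>R conv_vec gW (u (fst z)) (snd z)) \<bullet> gradx \<psi> z)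
         in integrable lebesgue F \<and> (\<integral>z. F z \<partial>lebesgue) = 0)) \<and>
     \<comment> \<open>energy identity\<close>
     integrable lebesgue (energy_density \<phi>' V W u0) \<and>
     (\<forall>t\<in>{0..T}. integrable lebesgue (energy_density \<phi>' V W (u t)) \<and>
        (\<integral>\<^sup>+z. indicator ({0..t} \<times> UNIV) z * ennreal (dissip u G gV gW z) \<partial>lebesgue) < \<infinity> \<and>
        energy \<phi>' V W (u t)
          + enn2real (\<integral>\<^sup>+z. indicator ({0..t} \<times> UNIV) z * ennreal (dissip u G gV gW z) \<partial>lebesgue)
          = energy \<phi>' V W u0)"

end

theory Submission
  imports Defs
begin

text \<open>Subtracting the energy identity, it suffices to bound
  \<open>\<integral> u|log u| + \<Xi>(u) + uV\<^sub>k + u(W*u)\<close> in terms of \<open>E\<^bsub>V\<^sub>k\<^esub>[u(t)] \<le> E\<^bsub>V\<^sub>k\<^esub>[u\<^sub>0] = E\<^bsub>V\<^sub>1\<^esub>[u\<^sub>0]\<close>;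
  the last equality holds because \<open>u\<^sub>0\<close> vanishes outside \<open>\<Omega>\<close>, where all \<open>V\<^sub>k\<close> agree.
  The potential and interaction terms are nonnegative and \<open>\<Xi>(u) \<ge> -u/(\<mu> b)\<close> since
  \<open>0 \<le> \<sigma>'(r) \<le> r\<^sup>b/\<mu>\<close>, so only the negative part of \<open>u log u\<close> needs control. Comparing \<open>u\<close>
  with a positive integrable weight \<open>p\<close> with \<open>-log p(x) \<le> \<alpha> + \<beta>|x|\<close> bounds it by the first
  moment of \<open>u\<close>, hence by the second moment, hence, through the uniform confinement
  \<open>V\<^sub>k(x) \<ge> c|x|\<^sup>2\<close>, by a constant plus half of \<open>\<integral> uV\<^sub>k\<close>, which the energy absorbs.\<close>

section \<open>The functions \<open>xi\<close> and \<open>Xi\<close>\<close>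

lemma set_integral_powr_le:
  fixes s b :: real
  assumes s: "0 < s" "s < 1" and b: "b > 0"
  shows "set_integrable lborel {s<..<1} (\<lambda>x. x powr (b - 1))"
    and "(LINT x:{s<..<1}|lborel. x powr (b - 1)) \<le> 1 / b"
proof -
  have cont: "continuous_on {s..1} (\<lambda>x. x powr (b - 1))"
    using s by (intro continuous_intros) auto
  show "set_integrable lborel {s<..<1} (\<lambda>x. x powr (b - 1))"
    by (rule set_integrable_subset[OF borel_integrable_atLeastAtMost'[OF cont]]) auto
  have "interval_lebesgue_integral lborel (ereal s) (ereal 1) (\<lambda>x. x powr (b - 1))
      = 1 powr b / b - s powr b / b"
  proof (rule interval_integral_FTC_finite)
    show "continuous_on {min s 1..max s 1} (\<lambda>x. x powr (b - 1))"
      using cont s by simp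
    fix x assume "min s 1 \<le> x" "x \<le> max s 1"
    then have "x > 0" using s by auto
    have "((\<lambda>z. z powr b / b) has_real_derivative b * x powr (b - 1) / b) (at x)"
      using has_real_derivative_powr[OF \<open>x > 0\<close>, of b] by (intro DERIV_cdivide) auto
    then show "((\<lambda>z. z powr b / b) has_vector_derivative x powr (b - 1))
        (at x within {min s 1..max s 1})"
      using b by (simp add: has_real_derivative_iff_has_vector_derivative has_vector_derivative_at_within)
  qed
  moreover have "interval_lebesgue_integral lborel (ereal s) (ereal 1) (\<lambda>x. x powr (b - 1))
      = (LINT x:{s<..<1}|lborel. x powr (b - 1))"
    using s by (simp add: interval_lebesgue_integral_def)
  ultimately show "(LINT x:{s<..<1}|lborel. x powr (b - 1)) \<le> 1 / b"
    using s b by simp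
qed

lemma xi_ge:
  fixes \<phi>' :: "real \<Rightarrow> real" and \<mu> b s :: real
  assumes sigma': "\<And>r. r > 0 \<Longrightarrow> 0 \<le> \<phi>' r - 1 \<and> \<phi>' r - 1 \<le> r powr b / \<mu>"
    and \<mu>: "\<mu> > 0" and b: "b > 0" and s: "s > 0"
  shows "xi \<phi>' s \<ge> - 1 / (\<mu> * b)"
proof -
  define h where "h r = (\<phi>' r - 1) / r" for r
  have h_nonneg: "h r \<ge> 0" if "r > 0" for r
    using sigma' that unfolding h_def by simp
  have h_le: "h r \<le> r powr (b - 1) / \<mu>" if "r > 0" for r
  proof -
    have "h r \<le> (r powr b / \<mu>) / r"
      unfolding h_def using sigma' that by (intro divide_right_mono) auto
    also have "\<dots> = r powr (b - 1) / \<mu>"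
      using that by (simp add: powr_diff)
    finally show ?thesis .
  qed
  show ?thesis
  proof (cases "s \<ge> 1")
    case True
    then have "xi \<phi>' s = (LINT x:{1<..<s}|lborel. h x)"
      unfolding xi_def h_def by (simp add: interval_lebesgue_integral_def)
    also have "\<dots> \<ge> 0"
      unfolding set_lebesgue_integral_def
      by (intro integral_nonneg_AE) (auto intro!: AE_I2 h_nonneg split: split_indicator)
    finally show ?thesis using \<mu> b by (simp add: order_trans[of _ 0])
  next
    case False
    then have xi_eq: "xi \<phi>' s = - (LINT x:{s<..<1}|lborel. h x)"
      unfolding xi_def h_def by (simp add: interval_lebesgue_integral_def)
    have "(LINT x:{s<..<1}|lborel. h x) \<le> 1 / (\<mu> * b)"
    proof (cases "set_integrable lborel {s<..<1} h")
      case True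
      have "(LINT x:{s<..<1}|lborel. h x) \<le> (LINT x:{s<..<1}|lborel. x powr (b - 1) / \<mu>)"
        using False s set_integral_powr_le(1)[of s b] b
        by (intro set_integral_mono True) (auto intro!: h_le)
      also have "\<dots> = (LINT x:{s<..<1}|lborel. x powr (b - 1)) / \<mu>"
        by simp
      also have "\<dots> \<le> (1 / b) / \<mu>"
        by (intro divide_right_mono set_integral_powr_le(2)) (use False s b \<mu> in auto)
      also have "\<dots> = 1 / (\<mu> * b)"
        by simp
      finally show ?thesis .
    next
      case False
      then show ?thesis
        using \<mu> b by (simp add: set_lebesgue_integral_def set_integrable_def not_integrable_integral_eq)
    qed
    then show ?thesis unfolding xi_eq by simp
  qed
qed

lemma Xi_ge:
  fixes \<phi>' :: "real \<Rightarrow> real" and K s :: real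
  assumes xi: "\<And>r. r > 0 \<Longrightarrow> xi \<phi>' r \<ge> - K" and K: "K \<ge> 0" and s: "s \<ge> 0"
  shows "Xi \<phi>' s \<ge> - K * s"
proof -
  have Xi_eq: "Xi \<phi>' s = (LINT x:{0<..<s}|lborel. xi \<phi>' x)"
    unfolding Xi_def using s by (simp add: interval_lebesgue_integral_def)
  show ?thesis
  proof (cases "set_integrable lborel {0<..<s} (xi \<phi>')")
    case True
    have const: "set_integrable lborel {0<..<s} (\<lambda>_. - K)"
      by (rule set_integrable_subset[OF borel_integrable_atLeastAtMost'[of 0 s]]) auto
    have "(LINT x:{0<..<s}|lborel. - K) \<le> (LINT x:{0<..<s}|lborel. xi \<phi>' x)"
      by (intro set_integral_mono const True xi) auto
    then show ?thesis
      using s by (simp add: Xi_eq set_integral_const mult.commute)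
  next
    case False
    then show ?thesis
      using K s by (simp add: Xi_eq set_lebesgue_integral_def set_integrable_def not_integrable_integral_eq)
  qed
qed

lemma Xi_ge_of_sigma_bounds:
  fixes \<phi>' :: "real \<Rightarrow> real" and \<mu> a b s :: real
  assumes sigma: "\<forall>s\<ge>0. \<mu> * s powr a \<le> \<phi>' s - 1 \<and> \<phi>' s - 1 \<le> s powr b / \<mu>"
    and \<mu>: "\<mu> > 0" and a: "a > 0" and ab: "b \<ge> a" and s: "s \<ge> 0"
  shows "Xi \<phi>' s \<ge> - (1 / (\<mu> * b)) * s"
proof (rule Xi_ge[OF _ _ s])
  have b: "b > 0"
    using a ab by linarith
  have "0 \<le> \<phi>' r - 1 \<and> \<phi>' r - 1 \<le> r powr b / \<mu>" if "r > 0" for r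
  proof -
    have "0 \<le> \<mu> * r powr a" "\<mu> * r powr a \<le> \<phi>' r - 1" "\<phi>' r - 1 \<le> r powr b / \<mu>"
      using \<mu> sigma that by auto
    then show ?thesis
      by linarith
  qed
  from xi_ge[OF this \<mu> b] show "- (1 / (\<mu> * b)) \<le> xi \<phi>' r" if "r > 0" for r
    using that by simp
  show "0 \<le> 1 / (\<mu> * b)"
    using \<mu> b by simp
qed

lemma borel_measurable_interval_integral:
  fixes g :: "real \<Rightarrow> real" and c :: real
  assumes "g \<in> borel_measurable borel"
  shows "(\<lambda>s. interval_lebesgue_integral lborel (ereal c) (ereal s) g) \<in> borel_measurable borel"
proof -
  have "(\<lambda>s. interval_lebesgue_integral lborel (ereal c) (ereal s) g)
      = (\<lambda>s. if c \<le> s then \<integral>x. (if c < x \<and> x < s then g x else 0) \<partial>lborel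
             else - (\<integral>x. (if s < x \<and> x < c then g x else 0) \<partial>lborel))"
    by (auto simp: interval_lebesgue_integral_def set_lebesgue_integral_def fun_eq_iff
        indicator_def intro!: Bochner_Integration.integral_cong)
  also have "\<dots> \<in> borel_measurable borel"
    using assms by measurable
  finally show ?thesis .
qed

lemma borel_measurable_Xi_nonneg:
  fixes \<phi>' :: "real \<Rightarrow> real"
  assumes "continuous_on {0..} \<phi>'"
  shows "(\<lambda>s. if 0 \<le> s then Xi \<phi>' s else 0) \<in> borel_measurable borel"
proof -
  \<comment> \<open>\<open>\<phi>'\<close> is only controlled on \<open>[0,\<infinity>)\<close>, so the integrand is extended by zero.\<close>
  define h where "h x = indicator {0<..} x *\<^sub>R ((\<phi>' x - 1) / x)" for x :: real
  define xi\<^sub>0 where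
    "xi\<^sub>0 s = (if 0 < s then interval_lebesgue_integral lborel (ereal 1) (ereal s) h else 0)" for s
  have h: "h \<in> borel_measurable borel"
    unfolding h_def by (rule borel_measurable_continuous_on_indicator)
      (use assms in \<open>auto intro!: continuous_intros elim: continuous_on_subset\<close>)
  have xi\<^sub>0: "xi\<^sub>0 \<in> borel_measurable borel"
    unfolding xi\<^sub>0_def using borel_measurable_interval_integral[OF h, of 1] by measurable
  have "xi \<phi>' s = xi\<^sub>0 s" if "s > 0" for s
    unfolding xi_def xi\<^sub>0_def h_def using that
    by (auto intro!: interval_integral_cong simp: min_def max_def einterval_iff indicator_def
        split: if_splits)
  then have "Xi \<phi>' s = interval_lebesgue_integral lborel (ereal 0) (ereal s) xi\<^sub>0" if "s \<ge> 0" for s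
    unfolding Xi_def using that
    by (auto intro!: interval_integral_cong simp: einterval_iff)
  then have "(\<lambda>s. if 0 \<le> s then Xi \<phi>' s else 0)
      = (\<lambda>s. if 0 \<le> s then interval_lebesgue_integral lborel (ereal 0) (ereal s) xi\<^sub>0 else 0)"
    by auto
  also have "\<dots> \<in> borel_measurable borel"
    using borel_measurable_interval_integral[OF xi\<^sub>0, of 0] by measurable
  finally show ?thesis .
qed

lemma borel_measurable_Xi_comp:
  fixes f :: "'a \<Rightarrow> real"
  assumes "continuous_on {0..} \<phi>'" and "f \<in> borel_measurable M" and "\<And>x. f x \<ge> 0"
  shows "(\<lambda>x. Xi \<phi>' (f x)) \<in> borel_measurable M"
proof -
  have "(\<lambda>x. Xi \<phi>' (f x)) = (\<lambda>x. (\<lambda>s. if 0 \<le> s then Xi \<phi>' s else 0) (f x))"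
    using assms(3) by simp
  with measurable_compose[OF assms(2) borel_measurable_Xi_nonneg[OF assms(1)]] show ?thesis
    by simp
qed

section \<open>A positive integrable weight with linearly growing logarithm\<close>

lemma emeasure_lborel_centered_cube:
  fixes r :: real
  assumes "r > 0"
  shows "emeasure lborel (cbox (- r *\<^sub>R One) (r *\<^sub>R (One :: 'a::euclidean_space)))
    = ennreal ((2 * r) ^ DIM('a))"
proof -
  have "(\<Prod>b\<in>(Basis :: 'a set). (r *\<^sub>R One - (- r *\<^sub>R One)) \<bullet> b) = (\<Prod>b\<in>(Basis :: 'a set). 2 * r)"
    by (intro prod.cong) (auto simp: inner_add_left)
  then show ?thesis
    using assms by (simp add: emeasure_lborel_cbox_eq inner_diff_left)
qed

lemma mem_centered_cube:
  fixes x :: "'a::euclidean_space"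
  assumes "norm x \<le> r"
  shows "x \<in> cbox (- r *\<^sub>R One) (r *\<^sub>R One)"
  using assms Basis_le_norm[of _ x] by (fastforce simp: mem_box abs_le_iff)

text \<open>The \<open>j\<close>-th term spreads mass \<open>2\<^sup>-\<^sup>j\<close> uniformly over the cube \<open>[-(j+1), j+1]\<^sup>d\<close>.\<close>
definition cube_weight :: "'a::euclidean_space \<Rightarrow> real" where
  "cube_weight x = (\<Sum>j. (1/2) ^ j / (2 * (real j + 1)) ^ DIM('a)
     * indicator (cbox (- (real j + 1) *\<^sub>R One) ((real j + 1) *\<^sub>R One)) x)"

lemma summable_cube_weight:
  "summable (\<lambda>j. (1/2) ^ j / (2 * (real j + 1)) ^ DIM('a)
     * indicator (cbox (- (real j + 1) *\<^sub>R One) ((real j + 1) *\<^sub>R (One :: 'a::euclidean_space))) x)"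
proof (rule summable_comparison_test[OF _ summable_geometric[of "1/2 :: real"]])
  have "(1/2) ^ j / (2 * (real j + 1)) ^ DIM('a) \<le> ((1/2 :: real) ^ j)" for j
  proof -
    have "(2 * (real j + 1)) ^ DIM('a) \<ge> 1"
      by (intro one_le_power) auto
    then show ?thesis
      by (simp add: divide_le_eq)
  qed
  then show "\<exists>N. \<forall>j\<ge>N. norm ((1/2) ^ j / (2 * (real j + 1)) ^ DIM('a)
      * indicator (cbox (- (real j + 1) *\<^sub>R One) ((real j + 1) *\<^sub>R (One :: 'a))) x) \<le> (1/2) ^ j"
    by (auto simp: indicator_def)
qed auto

lemma cube_weight_ge:
  fixes x :: "'a::euclidean_space"
  assumes "norm x \<le> real J + 1"
  shows "cube_weight x \<ge> (1/2) ^ J / (2 * (real J + 1)) ^ DIM('a)"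
proof -
  have "(1/2) ^ J / (2 * (real J + 1)) ^ DIM('a)
      = (\<Sum>j\<in>{J}. (1/2) ^ j / (2 * (real j + 1)) ^ DIM('a)
          * indicator (cbox (- (real j + 1) *\<^sub>R One) ((real j + 1) *\<^sub>R One)) x)"
    using mem_centered_cube[OF assms] by simp
  also have "\<dots> \<le> cube_weight x"
    unfolding cube_weight_def by (rule sum_le_suminf[OF summable_cube_weight]) auto
  finally show ?thesis .
qed

lemma norm_le_ceiling: "norm x \<le> real (nat \<lceil>norm x\<rceil>) + 1"
  by linarith

lemma cube_weight_pos: "cube_weight (x :: 'a::euclidean_space) > 0"
proof -
  have "0 < (1/2 :: real) ^ n / (2 * (real n + 1)) ^ DIM('a)" for n :: nat
    by simp
  then show ?thesis
    using cube_weight_ge[OF norm_le_ceiling] by (rule less_le_trans)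
qed

lemma neg_ln_cube_weight_le:
  fixes x :: "'a::euclidean_space"
  shows "- ln (cube_weight x) \<le> (1 + 4 * DIM('a)) + (1 + 2 * DIM('a)) * norm x"
proof -
  define J where "J = nat \<lceil>norm x\<rceil>"
  have J: "norm x \<le> real J + 1" "real J \<le> norm x + 1"
    unfolding J_def using norm_le_ceiling[of x] by simp_all
  have "- ln (cube_weight x) \<le> - ln ((1/2) ^ J / (2 * (real J + 1)) ^ DIM('a))"
    using cube_weight_ge[OF J(1)] cube_weight_pos[of x] by simp
  also have "\<dots> = real J * ln 2 + DIM('a) * ln (2 * (real J + 1))"
    by (simp add: ln_div ln_realpow ln_mult power_divide)
  also have "\<dots> \<le> real J * 1 + DIM('a) * (2 * (real J + 1))"
    using ln_le_minus_one[of 2] ln_le_minus_one[of "2 * (real J + 1)"]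
    by (intro add_mono mult_left_mono) auto
  also have "\<dots> \<le> (1 + 4 * DIM('a)) + (1 + 2 * DIM('a)) * norm x"
    using mult_left_mono[OF J(2), of "1 + 2 * DIM('a)"] by (simp add: algebra_simps)
  finally show ?thesis .
qed

lemma integrable_cube_weight: "integrable lebesgue (cube_weight :: 'a::euclidean_space \<Rightarrow> real)"
proof -
  define a :: "nat \<Rightarrow> real" where "a j = (1/2) ^ j / (2 * (real j + 1)) ^ DIM('a)" for j
  define C :: "nat \<Rightarrow> 'a set" where
    "C j = cbox (- (real j + 1) *\<^sub>R One) ((real j + 1) *\<^sub>R One)" for j
  have weight: "cube_weight = (\<lambda>x. \<Sum>j. a j * indicator (C j) x)"
    unfolding cube_weight_def a_def C_def ..
  have meas: "(cube_weight :: 'a \<Rightarrow> real) \<in> borel_measurable lborel"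
    unfolding weight C_def by measurable
  have summand_integral:
    "(\<integral>\<^sup>+x. ennreal (a j * indicator (C j) x) \<partial>lborel) = ennreal ((1/2) ^ j)" for j
  proof -
    have "(\<integral>\<^sup>+x. ennreal (a j * indicator (C j) x) \<partial>lborel) = ennreal (a j) * emeasure lborel (C j)"
      by (subst nn_integral_cmult_indicator[symmetric])
        (auto intro!: nn_integral_cong simp: C_def a_def indicator_def)
    also have "\<dots> = ennreal ((1/2) ^ j)"
      unfolding C_def a_def by (subst emeasure_lborel_centered_cube) (auto simp: ennreal_mult[symmetric])
    finally show ?thesis .
  qed
  have "(\<integral>\<^sup>+x. ennreal (cube_weight (x :: 'a)) \<partial>lborel)
      = (\<integral>\<^sup>+x. (\<Sum>j. ennreal (a j * indicator (C j) x)) \<partial>lborel)"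
    unfolding weight using summable_cube_weight
    by (intro nn_integral_cong suminf_ennreal2[symmetric]) (auto simp: a_def C_def indicator_def)
  also have "\<dots> = (\<Sum>j. (\<integral>\<^sup>+x. ennreal (a j * indicator (C j) x) \<partial>lborel))"
    by (rule nn_integral_suminf) (simp add: C_def)
  also have "\<dots> = (\<Sum>j. ennreal ((1/2) ^ j))"
    by (simp only: summand_integral)
  also have "\<dots> = ennreal (\<Sum>j. (1/2 :: real) ^ j)"
    by (rule suminf_ennreal2) (auto intro: summable_geometric)
  finally have "integrable lborel (cube_weight :: 'a \<Rightarrow> real)"
    by (intro integrableI_nonneg meas) (auto intro: less_imp_le cube_weight_pos)
  then show ?thesis
    using integrable_completion meas by (metis measurable_lborel1)
qed

section \<open>Entropy and moment estimates\<close>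

lemma ent_abs_eq: "ent_abs y = ent y + 2 * max 0 (- ent y)"
  by (cases "ln y \<ge> 0") (auto simp: ent_abs_def ent_def max_def mult_le_0_iff zero_le_mult_iff)

lemma neg_mult_ln_le_one:
  fixes t :: real
  assumes "t > 0"
  shows "- (t * ln t) \<le> 1"
proof -
  have "- ln t \<le> 1 / t - 1"
    using ln_le_minus_one[of "1 / t"] assms by (simp add: ln_div)
  then have "t * (- ln t) \<le> t * (1 / t - 1)"
    using assms by (intro mult_left_mono) auto
  then show ?thesis
    using assms by (simp add: algebra_simps)
qed

text \<open>For \<open>y \<ge> q\<^sup>2\<close> use \<open>-log y \<le> -2 log q\<close>; for smaller \<open>y\<close> use \<open>-y log y \<le> 2 \<surd>y \<le> 2q\<close>.\<close>
lemma neg_ent_le: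
  fixes y q :: real
  assumes y: "y \<ge> 0" and q: "q > 0"
  shows "- ent y \<le> 2 * y * max 0 (- ln q) + 2 * q"
proof (cases "y > 0 \<and> y < 1")
  case False
  then have "- ent y \<le> 0"
    using y by (auto simp: ent_def)
  also have "0 \<le> 2 * y * max 0 (- ln q) + 2 * q"
    using y q by simp
  finally show ?thesis .
next
  case True
  then have y0: "y > 0" by auto
  show ?thesis
  proof (cases "y \<ge> q\<^sup>2")
    case True
    then have "2 * ln q \<le> ln y"
      using q y0 ln_le_cancel_iff[of "q\<^sup>2" y] ln_realpow[of q 2] by simp
    then have "- (y * ln y) \<le> 2 * y * (- ln q)"
      using mult_left_mono[of "2 * ln q" "ln y" y] y0 by simp
    also have "\<dots> \<le> 2 * y * max 0 (- ln q)"
      using y0 by (intro mult_left_mono) auto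
    finally show ?thesis
      using y0 q by (simp add: ent_def)
  next
    case False
    define t where "t = sqrt y"
    have t: "t > 0" "t < q" "y = t * t"
      using y0 q False real_sqrt_less_mono[of y "q\<^sup>2"] unfolding t_def by auto
    have "- ent y = 2 * t * (- (t * ln t))"
      using t y0 by (simp add: ent_def ln_mult)
    also have "\<dots> \<le> 2 * t * 1"
      using neg_mult_ln_le_one[OF t(1)] t(1) by (intro mult_left_mono) auto
    also have "\<dots> \<le> 2 * q"
      using t(2) by simp
    also have "\<dots> \<le> 2 * y * max 0 (- ln q) + 2 * q"
      using y by simp
    finally show ?thesis .
  qed
qed

lemma integrable_of_sum_bounded_below:
  fixes f g h k :: "'a \<Rightarrow> real"
  assumes fg: "integrable M (\<lambda>x. f x + g x)" and f: "f \<in> borel_measurable M"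
    and h: "integrable M h" and k: "integrable M k"
    and f_ge: "\<And>x. - h x \<le> f x" and g_ge: "\<And>x. - k x \<le> g x"
  shows "integrable M f"
proof -
  have "integrable M (\<lambda>x. f x + h x)"
  proof (rule Bochner_Integration.integrable_bound)
    show "integrable M (\<lambda>x. (f x + g x) + h x + k x)"
      using fg h k by auto
    show "(\<lambda>x. f x + h x) \<in> borel_measurable M"
      using f h by auto
    show "AE x in M. norm (f x + h x) \<le> norm ((f x + g x) + h x + k x)"
    proof (rule AE_I2)
      fix x
      have "0 \<le> f x + h x" "f x + h x \<le> (f x + g x) + h x + k x"
        using f_ge[of x] g_ge[of x] by linarith+
      then show "norm (f x + h x) \<le> norm ((f x + g x) + h x + k x)"
        by simp
    qed
  qed
  then have "integrable M (\<lambda>x. (f x + h x) - h x)"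
    using h by (rule Bochner_Integration.integrable_diff)
  then show ?thesis
    by simp
qed

lemma integrable_first_moment:
  fixes f :: "'a::euclidean_space \<Rightarrow> real"
  assumes f0: "\<And>x. f x \<ge> 0" and f: "integrable lebesgue f"
    and f2: "integrable lebesgue (\<lambda>x. (norm x)\<^sup>2 * f x)"
  shows "integrable lebesgue (\<lambda>x. f x * norm x)"
proof (rule Bochner_Integration.integrable_bound)
  show "integrable lebesgue (\<lambda>x. f x + (norm x)\<^sup>2 * f x)"
    using f f2 by auto
  have "(\<lambda>x :: 'a. norm x) \<in> borel_measurable lebesgue"
    by (rule measurable_completion) simp
  then show "(\<lambda>x. f x * norm x) \<in> borel_measurable lebesgue"
    using f by measurable
  have bound: "norm x \<le> 1 + (norm x)\<^sup>2" for x :: 'a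
  proof -
    have "0 \<le> (norm x - 1)\<^sup>2"
      by simp
    then have "2 * norm x \<le> 1 + (norm x)\<^sup>2"
      by (simp add: power2_eq_square algebra_simps)
    then show ?thesis
      using norm_ge_zero[of x] by linarith
  qed
  then show "AE x in lebesgue. norm (f x * norm x) \<le> norm (f x + (norm x)\<^sup>2 * f x)"
    using mult_left_mono[OF bound f0] by (intro AE_I2) (simp add: f0 algebra_simps)
qed

lemma first_moment_le:
  fixes f :: "'a::euclidean_space \<Rightarrow> real"
  assumes f0: "\<And>x. f x \<ge> 0" and f: "integrable lebesgue f"
    and f2: "integrable lebesgue (\<lambda>x. (norm x)\<^sup>2 * f x)" and \<delta>: "\<delta> > 0"
  shows "(\<integral>x. f x * norm x \<partial>lebesgue)
    \<le> \<delta> * (\<integral>x. f x \<partial>lebesgue) + (\<integral>x. (norm x)\<^sup>2 * f x \<partial>lebesgue) / (4 * \<delta>)"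
proof -
  have bound: "norm x \<le> \<delta> + (norm x)\<^sup>2 / (4 * \<delta>)" for x :: 'a
  proof -
    have "4 * \<delta> * norm x \<le> (norm x)\<^sup>2 + 4 * \<delta> * \<delta>"
      using sum_power2_ge_zero[of "norm x - 2 * \<delta>" 0] by (simp add: power2_eq_square algebra_simps)
    then show ?thesis
      using \<delta> by (simp add: field_simps)
  qed
  have "f x * norm x \<le> \<delta> * f x + (norm x)\<^sup>2 * f x / (4 * \<delta>)" for x
    using mult_left_mono[OF bound f0, of x] by (simp add: algebra_simps)
  then have "(\<integral>x. f x * norm x \<partial>lebesgue) \<le> (\<integral>x. \<delta> * f x + (norm x)\<^sup>2 * f x / (4 * \<delta>) \<partial>lebesgue)"
    using integrable_first_moment[OF f0 f f2] f f2 by (intro integral_mono) auto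
  also have "\<dots> = \<delta> * (\<integral>x. f x \<partial>lebesgue) + (\<integral>x. (norm x)\<^sup>2 * f x \<partial>lebesgue) / (4 * \<delta>)"
    using f f2 by simp
  finally show ?thesis .
qed

lemma second_moment_le:
  fixes f V :: "'a::euclidean_space \<Rightarrow> real"
  assumes f0: "\<And>x. f x \<ge> 0" and f: "integrable lebesgue f"
    and f2: "integrable lebesgue (\<lambda>x. (norm x)\<^sup>2 * f x)"
    and fV: "integrable lebesgue (\<lambda>x. f x * V x)"
    and V0: "\<And>x. V x \<ge> 0" and V_ge: "\<And>x. norm x \<ge> R \<Longrightarrow> V x \<ge> c * (norm x)\<^sup>2" and c: "c > 0"
  shows "(\<integral>x. (norm x)\<^sup>2 * f x \<partial>lebesgue)
    \<le> R\<^sup>2 * (\<integral>x. f x \<partial>lebesgue) + (\<integral>x. f x * V x \<partial>lebesgue) / c"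
proof -
  have "(norm x)\<^sup>2 * f x \<le> R\<^sup>2 * f x + f x * V x / c" for x
  proof (cases "norm x \<ge> R")
    case True
    then have "(norm x)\<^sup>2 \<le> V x / c"
      using V_ge c by (simp add: field_simps)
    then have "(norm x)\<^sup>2 * f x \<le> f x * V x / c"
      using f0[of x] mult_right_mono[of "(norm x)\<^sup>2" "V x / c" "f x"] by (simp add: mult.commute)
    moreover have "0 \<le> R\<^sup>2 * f x"
      using f0[of x] by simp
    ultimately show ?thesis
      by linarith
  next
    case False
    then have "(norm x)\<^sup>2 * f x \<le> R\<^sup>2 * f x"
      using f0[of x] by (intro mult_right_mono power_mono) auto
    moreover have "0 \<le> f x * V x / c"
      using f0[of x] V0[of x] c by simp
    ultimately show ?thesis
      by linarith
  qed
  then have "(\<integral>x. (norm x)\<^sup>2 * f x \<partial>lebesgue) \<le> (\<integral>x. R\<^sup>2 * f x + f x * V x / c \<partial>lebesgue)"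
    using f f2 fV by (intro integral_mono) auto
  also have "\<dots> = R\<^sup>2 * (\<integral>x. f x \<partial>lebesgue) + (\<integral>x. f x * V x \<partial>lebesgue) / c"
    using f fV by simp
  finally show ?thesis .
qed

lemma neg_ent_integral_le:
  fixes f p :: "'a::euclidean_space \<Rightarrow> real"
  assumes f0: "\<And>x. f x \<ge> 0" and f: "integrable lebesgue f"
    and f1: "integrable lebesgue (\<lambda>x. f x * norm x)"
    and p: "integrable lebesgue p" and p_pos: "\<And>x. p x > 0"
    and p_ln: "\<And>x. - ln (p x) \<le> \<alpha> + \<beta> * norm x" and \<beta>: "\<beta> \<ge> 0"
  shows "integrable lebesgue (\<lambda>x. max 0 (- ent (f x)))"
    and "(\<integral>x. max 0 (- ent (f x)) \<partial>lebesgue) \<le> 2 * \<bar>\<alpha>\<bar> * (\<integral>x. f x \<partial>lebesgue)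
      + 2 * \<beta> * (\<integral>x. f x * norm x \<partial>lebesgue) + 2 * (\<integral>x. p x \<partial>lebesgue)"
proof -
  define L where "L x = 2 * \<bar>\<alpha>\<bar> * f x + 2 * \<beta> * (f x * norm x) + 2 * p x" for x
  have L: "integrable lebesgue L"
    unfolding L_def using f f1 p by auto
  have bound: "max 0 (- ent (f x)) \<le> L x" for x
  proof -
    have "max 0 (- ln (p x)) \<le> \<bar>\<alpha>\<bar> + \<beta> * norm x"
      using p_ln[of x] \<beta> by (simp add: mult_nonneg_nonneg)
    then have "2 * f x * max 0 (- ln (p x)) \<le> 2 * f x * (\<bar>\<alpha>\<bar> + \<beta> * norm x)"
      using f0[of x] by (intro mult_left_mono) auto
    moreover have "0 \<le> L x"
      unfolding L_def using f0[of x] p_pos[of x] \<beta> by simp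
    ultimately show ?thesis
      using neg_ent_le[OF f0[of x] p_pos[of x]] unfolding L_def by (simp add: algebra_simps)
  qed
  show int: "integrable lebesgue (\<lambda>x. max 0 (- ent (f x)))"
    using f bound by (intro Bochner_Integration.integrable_bound[OF L]) (auto simp: ent_def)
  have "(\<integral>x. max 0 (- ent (f x)) \<partial>lebesgue) \<le> (\<integral>x. L x \<partial>lebesgue)"
    using int L bound by (rule integral_mono)
  also have "\<dots> = 2 * \<bar>\<alpha>\<bar> * (\<integral>x. f x \<partial>lebesgue)
      + 2 * \<beta> * (\<integral>x. f x * norm x \<partial>lebesgue) + 2 * (\<integral>x. p x \<partial>lebesgue)"
    unfolding L_def using f f1 p by simp
  finally show "(\<integral>x. max 0 (- ent (f x)) \<partial>lebesgue) \<le> 2 * \<bar>\<alpha>\<bar> * (\<integral>x. f x \<partial>lebesgue)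
      + 2 * \<beta> * (\<integral>x. f x * norm x \<partial>lebesgue) + 2 * (\<integral>x. p x \<partial>lebesgue)" .
qed

section \<open>Energy estimates\<close>

definition abs_energy_density ::
  "(real \<Rightarrow> real) \<Rightarrow> ('a::euclidean_space \<Rightarrow> real) \<Rightarrow> ('a \<Rightarrow> real) \<Rightarrow> ('a \<Rightarrow> real) \<Rightarrow> 'a \<Rightarrow> real"
where
  "abs_energy_density \<phi>' V W u x = ent_abs (u x) + Xi \<phi>' (u x) + u x * V x + u x * conv W u x"

lemma AE_zero_outside_esupp:
  fixes f :: "'a::euclidean_space \<Rightarrow> real"
  assumes "esupp f \<subseteq> \<Omega>"
  shows "AE x in lebesgue. x \<notin> \<Omega> \<longrightarrow> f x = 0"
proof -
  define F where "F = {U. open U \<and> (AE x in lebesgue. x \<in> U \<longrightarrow> f x = 0)}"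
  obtain F' where F': "F' \<subseteq> F" "countable F'" "\<Union>F' = \<Union>F"
    using Lindelof[of F] unfolding F_def by blast
  have "AE x in lebesgue. \<forall>U\<in>F'. x \<in> U \<longrightarrow> f x = 0"
    using F' unfolding F_def by (subst AE_ball_countable) auto
  then show ?thesis
  proof (rule AE_mp, intro AE_I2 impI)
    fix x assume zero: "\<forall>U\<in>F'. x \<in> U \<longrightarrow> f x = 0" and "x \<notin> \<Omega>"
    then have "x \<in> \<Union>F"
      using assms unfolding esupp_def F_def by auto
    then show "f x = 0"
      using zero F'(3) by auto
  qed
qed

lemma energy_cong_esupp:
  fixes u V V' W :: "'a::euclidean_space \<Rightarrow> real"
  assumes "esupp u \<subseteq> \<Omega>" and "\<And>x. x \<in> \<Omega> \<Longrightarrow> V x = V' x"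
    and "integrable lebesgue (energy_density \<phi>' V W u)"
    and "integrable lebesgue (energy_density \<phi>' V' W u)"
  shows "energy \<phi>' V W u = energy \<phi>' V' W u"
  unfolding energy_def
proof (rule integral_cong_AE)
  show "AE x in lebesgue. energy_density \<phi>' V W u x = energy_density \<phi>' V' W u x"
    using AE_zero_outside_esupp[OF assms(1)]
    by (rule AE_mp) (auto intro!: AE_I2 simp: energy_density_def assms(2))
qed (use assms(3,4) in auto)

lemma neg_ent_integral_le_potential:
  fixes f V p :: "'a::euclidean_space \<Rightarrow> real"
  assumes f: "P2_dens f" and fV: "integrable lebesgue (\<lambda>x. f x * V x)"
    and V0: "\<And>x. V x \<ge> 0" and V_ge: "\<And>x. norm x \<ge> R \<Longrightarrow> V x \<ge> c * (norm x)\<^sup>2"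
    and c: "c > 0"
    and p: "integrable lebesgue p" "\<And>x. p x > 0" "\<And>x. - ln (p x) \<le> \<alpha> + \<beta> * norm x"
    and \<beta>: "\<beta> \<ge> 0"
  shows "(\<integral>x. max 0 (- ent (f x)) \<partial>lebesgue) \<le> 2 * \<bar>\<alpha>\<bar> + 2 * (\<integral>x. p x \<partial>lebesgue)
      + 2 * \<beta> * (\<beta> / c + 1) + c * R\<^sup>2 / 2 + (\<integral>x. f x * V x \<partial>lebesgue) / 2"
proof -
  \<comment> \<open>\<open>\<delta> \<ge> \<beta>/c\<close> keeps the second-moment term below half of \<open>\<integral> f V\<close>.\<close>
  define \<delta> where "\<delta> = \<beta> / c + 1"
  have \<delta>: "\<delta> > 0" "\<beta> \<le> c * \<delta>"
    unfolding \<delta>_def using \<beta> c by (auto simp: field_simps add_nonneg_pos)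
  from f have f0: "\<And>x. f x \<ge> 0" and f_int: "integrable lebesgue f" and f1: "(\<integral>x. f x \<partial>lebesgue) = 1"
    and f2: "integrable lebesgue (\<lambda>x. (norm x)\<^sup>2 * f x)"
    unfolding P2_dens_def by auto
  define M1 where "M1 = (\<integral>x. f x * norm x \<partial>lebesgue)"
  define M2 where "M2 = (\<integral>x. (norm x)\<^sup>2 * f x \<partial>lebesgue)"
  have M2: "0 \<le> M2" "M2 \<le> R\<^sup>2 + (\<integral>x. f x * V x \<partial>lebesgue) / c"
    unfolding M2_def using second_moment_le[OF f0 f_int f2 fV V0 V_ge c] f0 f1
    by (auto intro!: integral_nonneg_AE)
  note neg_ent = neg_ent_integral_le[OF f0 f_int integrable_first_moment[OF f0 f_int f2] p \<beta>]
  have "2 * \<beta> * M1 \<le> 2 * \<beta> * (\<delta> + M2 / (4 * \<delta>))"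
    unfolding M1_def M2_def using first_moment_le[OF f0 f_int f2 \<delta>(1)] f1 \<beta>
    by (intro mult_left_mono) auto
  also have "\<dots> = 2 * \<beta> * \<delta> + \<beta> / (2 * \<delta>) * M2"
    using \<delta> by (simp add: field_simps)
  also have "\<dots> \<le> 2 * \<beta> * \<delta> + c / 2 * M2"
    using \<delta> M2(1) by (intro add_left_mono mult_right_mono) (auto simp: field_simps)
  also have "\<dots> \<le> 2 * \<beta> * \<delta> + c / 2 * (R\<^sup>2 + (\<integral>x. f x * V x \<partial>lebesgue) / c)"
    using M2(2) c by (intro add_left_mono mult_left_mono) auto
  also have "\<dots> = 2 * \<beta> * \<delta> + c * R\<^sup>2 / 2 + (\<integral>x. f x * V x \<partial>lebesgue) / 2"
    using c by (simp add: field_simps)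
  finally have "2 * \<beta> * M1 \<le> 2 * \<beta> * \<delta> + c * R\<^sup>2 / 2 + (\<integral>x. f x * V x \<partial>lebesgue) / 2" .
  moreover have "(\<integral>x. max 0 (- ent (f x)) \<partial>lebesgue) \<le> 2 * \<bar>\<alpha>\<bar> + 2 * \<beta> * M1 + 2 * (\<integral>x. p x \<partial>lebesgue)"
    using neg_ent(2) f1 unfolding M1_def by simp
  ultimately show ?thesis
    unfolding \<delta>_def by linarith
qed

lemma integrable_energy_terms:
  fixes f V W :: "'a::euclidean_space \<Rightarrow> real" and \<phi>' :: "real \<Rightarrow> real"
  assumes f0: "\<And>x. f x \<ge> 0" and f: "integrable lebesgue f"
    and V: "V \<in> borel_measurable lebesgue" and V0: "\<And>x. V x \<ge> 0" and W0: "\<And>x. W x \<ge> 0"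
    and Xi_ge: "\<And>s. s \<ge> 0 \<Longrightarrow> Xi \<phi>' s \<ge> - K * s"
    and \<phi>': "continuous_on {0..} \<phi>'"
    and neg_ent: "integrable lebesgue (\<lambda>x. max 0 (- ent (f x)))"
    and e: "integrable lebesgue (energy_density \<phi>' V W f)"
  shows "integrable lebesgue (\<lambda>x. ent (f x))" and "integrable lebesgue (\<lambda>x. Xi \<phi>' (f x))"
    and "integrable lebesgue (\<lambda>x. f x * V x)" and "integrable lebesgue (\<lambda>x. f x * conv W f x)"
proof -
  define En where "En x = ent (f x)" for x
  define X where "X x = Xi \<phi>' (f x)" for x
  define P where "P x = f x * V x" for x
  define A where "A x = f x * conv W f x" for x
  have e_eq: "energy_density \<phi>' V W f = (\<lambda>x. En x + X x + P x + A x / 2)"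
    by (simp add: fun_eq_iff energy_density_def En_def X_def P_def A_def)
  have lower: "- max 0 (- En x) \<le> En x" "- (K * f x) \<le> X x" "0 \<le> P x" "0 \<le> A x" for x
    using Xi_ge[OF f0] f0[of x] V0[of x] W0 f0
    by (auto simp: En_def X_def P_def A_def conv_def intro!: integral_nonneg_AE)
  have Kf: "integrable lebesgue (\<lambda>x. K * f x)"
    using f by simp
  have meas: "X \<in> borel_measurable lebesgue" "En \<in> borel_measurable lebesgue"
    "P \<in> borel_measurable lebesgue"
  proof -
    show "X \<in> borel_measurable lebesgue"
      unfolding X_def[abs_def] using borel_measurable_Xi_comp[OF \<phi>' borel_measurable_integrable[OF f] f0] .
    show "En \<in> borel_measurable lebesgue"
      unfolding En_def[abs_def] ent_def using f by measurable
    show "P \<in> borel_measurable lebesgue"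
      unfolding P_def[abs_def] using f V by measurable
  qed
  have neg_En: "integrable lebesgue (\<lambda>x. max 0 (- En x))"
    using neg_ent by (simp add: En_def)
  have "integrable lebesgue En"
  proof (rule integrable_of_sum_bounded_below[where h = "\<lambda>x. max 0 (- En x)"])
    show "integrable lebesgue (\<lambda>x. En x + (X x + P x + A x / 2))"
      using e unfolding e_eq by (simp add: add.assoc)
    show "- (K * f x) \<le> X x + P x + A x / 2" for x
      using lower[of x] by linarith
  qed (use meas neg_En Kf lower in auto)
  moreover have "integrable lebesgue X"
  proof (rule integrable_of_sum_bounded_below[where h = "\<lambda>x. K * f x"])
    show "integrable lebesgue (\<lambda>x. X x + (En x + P x + A x / 2))"
      using e unfolding e_eq by (simp add: algebra_simps)
    show "- max 0 (- En x) \<le> En x + P x + A x / 2" for x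
      using lower[of x] by linarith
  qed (use meas neg_En Kf lower in auto)
  moreover have "integrable lebesgue P"
  proof (rule integrable_of_sum_bounded_below[where h = "\<lambda>_. 0"])
    show "integrable lebesgue (\<lambda>x. P x + (En x + X x + A x / 2))"
      using e unfolding e_eq by (simp add: algebra_simps)
    show "- (\<lambda>_. 0) x \<le> P x" for x
      using lower[of x] by simp
    show "- (max 0 (- En x) + K * f x) \<le> En x + X x + A x / 2" for x
      using lower[of x] by linarith
  qed (use meas neg_En Kf in auto)
  ultimately show "integrable lebesgue (\<lambda>x. ent (f x))" "integrable lebesgue (\<lambda>x. Xi \<phi>' (f x))"
    "integrable lebesgue (\<lambda>x. f x * V x)"
    by (simp_all add: En_def[abs_def] X_def[abs_def] P_def[abs_def])
  have "A = (\<lambda>x. 2 * (energy_density \<phi>' V W f x - En x - X x - P x))"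
    unfolding e_eq by auto
  with e \<open>integrable lebesgue En\<close> \<open>integrable lebesgue X\<close> \<open>integrable lebesgue P\<close>
  show "integrable lebesgue (\<lambda>x. f x * conv W f x)"
    unfolding A_def[abs_def] by simp
qed

lemma abs_energy_le:
  fixes f V W p :: "'a::euclidean_space \<Rightarrow> real" and \<phi>' :: "real \<Rightarrow> real"
  assumes f: "P2_dens f"
    and V: "V \<in> borel_measurable lebesgue" and V0: "\<And>x. V x \<ge> 0"
    and V_ge: "\<And>x. norm x \<ge> R \<Longrightarrow> V x \<ge> c * (norm x)\<^sup>2" and c: "c > 0"
    and W0: "\<And>x. W x \<ge> 0"
    and Xi_ge: "\<And>s. s \<ge> 0 \<Longrightarrow> Xi \<phi>' s \<ge> - K * s"
    and \<phi>': "continuous_on {0..} \<phi>'"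
    and p: "integrable lebesgue p" "\<And>x. p x > 0" "\<And>x. - ln (p x) \<le> \<alpha> + \<beta> * norm x"
    and \<beta>: "\<beta> \<ge> 0"
    and e: "integrable lebesgue (energy_density \<phi>' V W f)"
  defines "A \<equiv> 2 * \<bar>\<alpha>\<bar> + 2 * (\<integral>x. p x \<partial>lebesgue) + 2 * \<beta> * (\<beta> / c + 1) + c * R\<^sup>2 / 2"
  shows "integrable lebesgue (abs_energy_density \<phi>' V W f)"
    and "(\<integral>x. abs_energy_density \<phi>' V W f x \<partial>lebesgue) \<le> 5 * energy \<phi>' V W f + 6 * A + 4 * K"
proof -
  from f have f0: "\<And>x. f x \<ge> 0" and f_int: "integrable lebesgue f" and f1: "(\<integral>x. f x \<partial>lebesgue) = 1"
    and f2: "integrable lebesgue (\<lambda>x. (norm x)\<^sup>2 * f x)"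
    unfolding P2_dens_def by auto
  define n where "n x = max 0 (- ent (f x))" for x
  have n: "integrable lebesgue n"
    unfolding n_def[abs_def]
    by (rule neg_ent_integral_le(1)[OF f0 f_int integrable_first_moment[OF f0 f_int f2] p \<beta>])
  note terms = integrable_energy_terms[OF f0 f_int V V0 W0 Xi_ge \<phi>' n[unfolded n_def[abs_def]] e]
  define IEn IX IV IA N where "IEn = (\<integral>x. ent (f x) \<partial>lebesgue)" and "IX = (\<integral>x. Xi \<phi>' (f x) \<partial>lebesgue)"
    and "IV = (\<integral>x. f x * V x \<partial>lebesgue)" and "IA = (\<integral>x. f x * conv W f x \<partial>lebesgue)"
    and "N = (\<integral>x. n x \<partial>lebesgue)"
  have energy: "energy \<phi>' V W f = IEn + IX + IV + IA / 2"
    using terms unfolding energy_def energy_density_def IEn_def IX_def IV_def IA_def by simp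
  have abs_eq: "abs_energy_density \<phi>' V W f = (\<lambda>x. ent (f x) + 2 * n x + Xi \<phi>' (f x) + f x * V x + f x * conv W f x)"
    by (simp add: fun_eq_iff abs_energy_density_def ent_abs_eq n_def)
  show "integrable lebesgue (abs_energy_density \<phi>' V W f)"
    unfolding abs_eq using terms n by simp
  have abs_int: "(\<integral>x. abs_energy_density \<phi>' V W f x \<partial>lebesgue) = IEn + 2 * N + IX + IV + IA"
    unfolding abs_eq IEn_def IX_def IV_def IA_def N_def using terms n by simp
  have "- N \<le> IEn"
    unfolding IEn_def N_def using terms n by (simp flip: integral_minus) (intro integral_mono; auto simp: n_def)
  moreover have "- K \<le> IX"
  proof -
    have "(\<integral>x. - K * f x \<partial>lebesgue) \<le> IX"
      unfolding IX_def using terms f_int Xi_ge[OF f0] by (intro integral_mono) auto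
    then show ?thesis
      using f1 by simp
  qed
  moreover have "0 \<le> IV" "0 \<le> IA"
    unfolding IV_def IA_def using f0 V0 W0
    by (auto intro!: integral_nonneg_AE mult_nonneg_nonneg simp: conv_def)
  moreover have "N \<le> A + IV / 2"
    unfolding N_def n_def[abs_def] A_def IV_def
    by (rule neg_ent_integral_le_potential[OF f terms(3) V0 V_ge c p \<beta>])
  \<comment> \<open>the energy bounds \<open>IV\<close> by \<open>energy + N + K\<close>, so \<open>N \<le> A + IV/2\<close> can be absorbed\<close>
  ultimately show "(\<integral>x. abs_energy_density \<phi>' V W f x \<partial>lebesgue) \<le> 5 * energy \<phi>' V W f + 6 * A + 4 * K"
    unfolding abs_int energy by argo
qed

lemma free_energy_solution_abs_energy_le:
  fixes u :: "real \<Rightarrow> 'a::euclidean_space \<Rightarrow> real" and V W p :: "'a \<Rightarrow> real"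
  assumes sol: "free_energy_solution \<phi> \<phi>' W gW V gV u0 T u G" and t: "t \<in> {0..T}"
    and V: "V \<in> borel_measurable lebesgue" and V0: "\<And>x. V x \<ge> 0"
    and V_ge: "\<And>x. norm x \<ge> R \<Longrightarrow> V x \<ge> c * (norm x)\<^sup>2" and c: "c > 0"
    and W0: "\<And>x. W x \<ge> 0"
    and Xi_ge: "\<And>s. s \<ge> 0 \<Longrightarrow> Xi \<phi>' s \<ge> - K * s"
    and \<phi>': "continuous_on {0..} \<phi>'"
    and p: "integrable lebesgue p" "\<And>x. p x > 0" "\<And>x. - ln (p x) \<le> \<alpha> + \<beta> * norm x"
    and \<beta>: "\<beta> \<ge> 0"
  defines "A \<equiv> 2 * \<bar>\<alpha>\<bar> + 2 * (\<integral>x. p x \<partial>lebesgue) + 2 * \<beta> * (\<beta> / c + 1) + c * R\<^sup>2 / 2"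
    and "D \<equiv> \<integral>\<^sup>+z. indicator ({0..t} \<times> UNIV) z * ennreal (dissip u G gV gW z) \<partial>lebesgue"
  shows "integrable lebesgue (abs_energy_density \<phi>' V W (u t)) \<and> D < \<infinity> \<and>
    (\<integral>x. abs_energy_density \<phi>' V W (u t) x \<partial>lebesgue) + enn2real D
      \<le> 5 * energy \<phi>' V W u0 + 6 * A + 4 * K"
proof -
  from sol t have u: "P2_dens (u t)" "integrable lebesgue (energy_density \<phi>' V W (u t))" "D < \<infinity>"
    and identity: "energy \<phi>' V W (u t) + enn2real D = energy \<phi>' V W u0"
    unfolding free_energy_solution_def D_def by auto
  note bound = abs_energy_le[where R = R and K = K, OF u(1) V V0 V_ge c W0 Xi_ge \<phi>' p \<beta> u(2)]
  have "energy \<phi>' V W (u t) \<le> energy \<phi>' V W u0"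
    using identity enn2real_nonneg[of D] by linarith
  with bound(2) identity
  have "(\<integral>x. abs_energy_density \<phi>' V W (u t) x \<partial>lebesgue) + enn2real D
      \<le> 5 * energy \<phi>' V W u0 + 6 * A + 4 * K"
    unfolding A_def by linarith
  with bound(1) u(3) show ?thesis
    by blast
qed

theorem mainTheorem13:
  fixes \<Omega> :: "'a::euclidean_space set"
    and T :: real
    and u0 :: "'a \<Rightarrow> real"
    and W :: "'a \<Rightarrow> real" and gW :: "'a \<Rightarrow> 'a"
    and \<phi> \<phi>' :: "real \<Rightarrow> real" and \<mu> a b :: real
    and V0 :: "'a \<Rightarrow> real"
    and V :: "nat \<Rightarrow> 'a \<Rightarrow> real" and gV :: "nat \<Rightarrow> 'a \<Rightarrow> 'a"
    and c R :: real
    and u :: "nat \<Rightarrow> real \<Rightarrow> 'a \<Rightarrow> real" and G :: "nat \<Rightarrow> real \<Rightarrow> 'a \<Rightarrow> 'a"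
  assumes dom: "C2_domain \<Omega>"
    and T_pos: "T > 0"
    \<comment> \<open>Assumption B (i)\<close>
    and u0_nonneg: "\<forall>x. u0 x \<ge> 0"
    and u0_int: "integrable lebesgue u0" "(\<integral>x. u0 x \<partial>lebesgue) = 1"
    and u0_supp: "esupp u0 \<subseteq> \<Omega>"
    and u0_energy: "integrable lebesgue (energy_density \<phi>' (V 1) W u0)"
    \<comment> \<open>Assumption B (ii)\<close>
    and W_reg: "W1inf_loc_with W gW"
    and W_sym: "\<forall>x. W (- x) = W x"
    and W_nonneg: "\<forall>x. W x \<ge> 0"
    \<comment> \<open>Assumption B (iv)\<close>
    and phi_C1: "continuous_on {0..} \<phi>'"
    and phi_deriv: "\<forall>s\<ge>0. (\<phi> has_real_derivative \<phi>' s) (at s within {0..})"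
    and phi_mono: "mono_on {0..} \<phi>"
    and phi_0: "\<phi> 0 = 0"
    and mu_pos: "\<mu> > 0" and a_pos: "a > 0" and ab: "b \<ge> a"
    and sigma_bounds: "\<forall>s\<ge>0. \<mu> * s powr a \<le> \<phi>' s - 1 \<and> \<phi>' s - 1 \<le> s powr b / \<mu>"
    \<comment> \<open>V_0\<close>
    and V0_reg: "W1inf_on \<Omega> V0"
    and V0_nonneg: "\<forall>x\<in>\<Omega>. V0 x \<ge> 0"
    \<comment> \<open>confining potentials V_k (Assumption B (iii) uniformly in k)\<close>
    and Vk_reg: "\<forall>k\<ge>1. W1inf_loc_with (V k) (gV k)"
    and Vk_nonneg: "\<forall>k\<ge>1. \<forall>x. V k x \<ge> 0"
    and Vk_Omega: "\<forall>k\<ge>1. \<forall>x\<in>\<Omega>. V k x = V0 x"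
    and Vk_far: "\<forall>k\<ge>1. \<forall>x. infdist x \<Omega> > 1 / real k \<longrightarrow> V k x \<ge> real k"
    and c_pos: "c > 0"
    and Vk_growth: "\<forall>k\<ge>1. \<forall>x. norm x \<ge> R \<longrightarrow> V k x \<ge> c * (norm x)\<^sup>2"
    \<comment> \<open>u_k free energy solution of (E_{V_k})\<close>
    and sol: "\<forall>k\<ge>1. free_energy_solution \<phi> \<phi>' W gW (V k) (gV k) u0 T (u k) (G k)"
  shows "\<exists>C. \<forall>k\<ge>1. \<forall>T'\<in>{0..T}.
     integrable lebesgue (\<lambda>x. ent_abs (u k T' x) + Xi \<phi>' (u k T' x) + u k T' x * V k x
                              + u k T' x * conv W (u k T') x) \<and>
     (\<integral>\<^sup>+z. indicator ({0..T'} \<times> UNIV) z * ennreal (dissip (u k) (G k) (gV k) gW z) \<partial>lebesgue) < \<infinity> \<and>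
     (\<integral>x. ent_abs (u k T' x) + Xi \<phi>' (u k T' x) + u k T' x * V k x
                              + u k T' x * conv W (u k T') x \<partial>lebesgue)
     + enn2real (\<integral>\<^sup>+z. indicator ({0..T'} \<times> UNIV) z * ennreal (dissip (u k) (G k) (gV k) gW z) \<partial>lebesgue)
     \<le> C"
proof -
  define K where "K = 1 / (\<mu> * b)"
  have Xi_lower: "Xi \<phi>' s \<ge> - K * s" if "s \<ge> 0" for s
    unfolding K_def using Xi_ge_of_sigma_bounds[OF sigma_bounds mu_pos a_pos ab that] .
  define A where "A = 2 * \<bar>1 + 4 * real DIM('a)\<bar> + 2 * (\<integral>x. cube_weight (x :: 'a) \<partial>lebesgue)
    + 2 * (1 + 2 * real DIM('a)) * ((1 + 2 * real DIM('a)) / c + 1) + c * R\<^sup>2 / 2"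
  have "integrable lebesgue (abs_energy_density \<phi>' (V k) W (u k t)) \<and>
      (\<integral>\<^sup>+z. indicator ({0..t} \<times> UNIV) z * ennreal (dissip (u k) (G k) (gV k) gW z) \<partial>lebesgue) < \<infinity> \<and>
      (\<integral>x. abs_energy_density \<phi>' (V k) W (u k t) x \<partial>lebesgue)
      + enn2real (\<integral>\<^sup>+z. indicator ({0..t} \<times> UNIV) z * ennreal (dissip (u k) (G k) (gV k) gW z) \<partial>lebesgue)
      \<le> 5 * energy \<phi>' (V 1) W u0 + 6 * A + 4 * K"
    if k: "k \<ge> 1" and t: "t \<in> {0..T}" for k t
  proof -
    from k sol Vk_nonneg Vk_growth have sol_k: "free_energy_solution \<phi> \<phi>' W gW (V k) (gV k) u0 T (u k) (G k)"
      and V: "\<And>x. V k x \<ge> 0" "\<And>x. norm x \<ge> R \<Longrightarrow> V k x \<ge> c * (norm x)\<^sup>2"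
      by auto
    have "V k \<in> borel_measurable lebesgue"
      using Vk_reg k unfolding W1inf_loc_with_def Linf_loc_def set_borel_measurable_def by auto
    note bound = free_energy_solution_abs_energy_le[OF sol_k t this V c_pos _ Xi_lower phi_C1
        integrable_cube_weight cube_weight_pos neg_ln_cube_weight_le]
    have "energy \<phi>' (V k) W u0 = energy \<phi>' (V 1) W u0"
      using sol_k Vk_Omega k
      by (intro energy_cong_esupp[OF u0_supp _ _ u0_energy]) (auto simp: free_energy_solution_def)
    with bound W_nonneg show ?thesis
      unfolding A_def by simp
  qed
  then show ?thesis
    unfolding abs_energy_density_def by blast
qed

end
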